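(* For every integer $k\ge 1$, the complete $(k+1)$-partite graph $K_{1,1,2,\ldots,k}$ (with parts of sizes $1,1,2,3,\ldots,k$) is uniquely $k$-list colorable.
   Context: All graphs are finite, simple and undirected. A list assignment $L$ for a graph $G$ assigns to each vertex $v$ a set $L(v)$ of colors; an $L$-coloring is a proper vertex coloring $c$ of $G$ with $c(v)\in L(v)$ for every vertex $v$. A $k$-list assignment is a list assignment with $|L(v)|=k$ for all $v$. $G$ is uniquely $k$-list colorable (U$k$LC) if there exists a $k$-list assignment $L$ such that $G$ has exactly one $L$-coloring. *)

theory Defs
  imports Main
begin

definition simple_graph :: "'a set \<Rightarrow> ('a \<Rightarrow> 'a \<Rightarrow> bool) \<Rightarrow> bool" where
  "simple_graph V E \<longleftrightarrow> finite V \<and> (\<forall>u v. E u v \<longrightarrow> u \<in> V \<and> v \<in> V)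
     \<and> (\<forall>u v. E u v \<longrightarrow> E v u) \<and> (\<forall>v. \<not> E v v)"

definition L_coloring ::
  "'a set \<Rightarrow> ('a \<Rightarrow> 'a \<Rightarrow> bool) \<Rightarrow> ('a \<Rightarrow> 'c set) \<Rightarrow> ('a \<Rightarrow> 'c) \<Rightarrow> bool" where
  "L_coloring V E L c \<longleftrightarrow>
     (\<forall>v\<in>V. c v \<in> L v) \<and> (\<forall>u\<in>V. \<forall>v\<in>V. E u v \<longrightarrow> c u \<noteq> c v)
     \<and> (\<forall>v. v \<notin> V \<longrightarrow> c v = undefined)"

definition k_list_assignment :: "'a set \<Rightarrow> nat \<Rightarrow> ('a \<Rightarrow> 'c set) \<Rightarrow> bool" where
  "k_list_assignment V k L \<longleftrightarrow> (\<forall>v\<in>V. finite (L v) \<and> card (L v) = k)"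

definition uniquely_k_list_colorable :: "'a set \<Rightarrow> ('a \<Rightarrow> 'a \<Rightarrow> bool) \<Rightarrow> nat \<Rightarrow> bool" where
  "uniquely_k_list_colorable V E k \<longleftrightarrow>
     (\<exists>L :: 'a \<Rightarrow> nat set. k_list_assignment V k L \<and> (\<exists>!c. L_coloring V E L c))"

definition cmp_vertices :: "nat \<Rightarrow> (nat \<Rightarrow> nat) \<Rightarrow> (nat \<times> nat) set" where
  "cmp_vertices m s = {(i, j). i < m \<and> j < s i}"

definition cmp_edges :: "nat \<Rightarrow> (nat \<Rightarrow> nat) \<Rightarrow> nat \<times> nat \<Rightarrow> nat \<times> nat \<Rightarrow> bool" where
  "cmp_edges m s u v \<longleftrightarrow> u \<in> cmp_vertices m s \<and> v \<in> cmp_vertices m s \<and> fst u \<noteq> fst v"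

definition K_sizes :: "nat \<Rightarrow> nat" where
  "K_sizes i = (if i = 0 then 1 else i)"

end

theory Submission
  imports Defs
begin

text \<open>Give every vertex all colors 0..k but one, so that a vertex (i, j) with
i \<ge> 1 misses color j. With only k + 1 colors for k + 1
parts, every coloring uses one color per part and the parts receive pairwise distinct colors,
i.e. it is given by a permutation of 0..k. Part i contains vertices missing
each color below i, so the permutation never decreases, and a non-decreasing
permutation of a finite set is the identity.\<close>

lemma mem_cmp_vertices [simp]: "(i, j) \<in> cmp_vertices m s \<longleftrightarrow> i < m \<and> j < s i"
  by (simp add: cmp_vertices_def)

lemma inflationary_inj_endo_fixes:
  fixes f :: "'a \<Rightarrow> 'a::ordered_cancel_comm_monoid_add"
  assumes "finite A" "f ` A \<subseteq> A" "inj_on f A" "\<And>y. y \<in> A \<Longrightarrow> y \<le> f y" "x \<in> A"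
  shows "f x = x"
proof -
  have "sum f A = sum id A"
    using sum.reindex[OF \<open>inj_on f A\<close>, of id] endo_inj_surj[OF assms(1-3)] by simp
  then show ?thesis
    using sum_mono_inv[of id A f x] assms(1,4,5) by simp
qed

lemma cmp_coloring_by_parts:
  fixes c :: "nat \<times> nat \<Rightarrow> 'c"
  assumes parts_nonempty: "\<And>i. i < m \<Longrightarrow> 0 < s i"
    and colors: "c ` cmp_vertices m s \<subseteq> C" "finite C" "card C \<le> m"
    and proper: "\<And>u v. cmp_edges m s u v \<Longrightarrow> c u \<noteq> c v"
  shows "bij_betw (\<lambda>i. c (i, 0)) {..<m} C"
    and "\<And>i j. (i, j) \<in> cmp_vertices m s \<Longrightarrow> c (i, j) = c (i, 0)"
proof -
  let ?\<sigma> = "\<lambda>i. c (i, 0)"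
  have root: "(i, 0) \<in> cmp_vertices m s" if "i < m" for i
    using parts_nonempty[OF that] that by simp
  have "inj_on ?\<sigma> {..<m}"
  proof (rule inj_onI)
    fix i i'
    assume "i \<in> {..<m}" "i' \<in> {..<m}" "c (i, 0) = c (i', 0)"
    then show "i = i'"
      using proper[of "(i, 0)" "(i', 0)"] root by (auto simp: cmp_edges_def)
  qed
  moreover have "?\<sigma> ` {..<m} = C"
  proof (rule card_subset_eq[OF colors(2)])
    show sub: "?\<sigma> ` {..<m} \<subseteq> C"
      using colors(1) root by auto
    have "card (?\<sigma> ` {..<m}) = m"
      using card_image[OF \<open>inj_on ?\<sigma> {..<m}\<close>] by simp
    then show "card (?\<sigma> ` {..<m}) = card C"
      using card_mono[OF colors(2) sub] colors(3) by linarith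
  qed
  ultimately show "bij_betw ?\<sigma> {..<m} C"
    by (simp add: bij_betw_def)
  fix i j
  assume v: "(i, j) \<in> cmp_vertices m s"
  then have "c (i, j) \<in> ?\<sigma> ` {..<m}"
    using colors(1) \<open>?\<sigma> ` {..<m} = C\<close> by blast
  then obtain i' where "i' < m" "c (i, j) = c (i', 0)"
    by auto
  moreover have "i' = i"
    using proper[of "(i, j)" "(i', 0)"] v root[OF \<open>i' < m\<close>] \<open>c (i, j) = c (i', 0)\<close>
    by (auto simp: cmp_edges_def)
  ultimately show "c (i, j) = c (i, 0)"
    by simp
qed

text \<open>Vertex (0, 0) misses color 1 only to make its list of size k.\<close>

definition K_list :: "nat \<Rightarrow> nat \<times> nat \<Rightarrow> nat set" where
  "K_list k v = {..k} - {if fst v = 0 then 1 else snd v}"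

definition K_part_coloring :: "nat \<Rightarrow> nat \<times> nat \<Rightarrow> nat" where
  "K_part_coloring k v = (if v \<in> cmp_vertices (k + 1) K_sizes then fst v else undefined)"

lemma k_list_assignment_K_list:
  assumes "k \<ge> 1"
  shows "k_list_assignment (cmp_vertices (k + 1) K_sizes) k (K_list k)"
  unfolding k_list_assignment_def
proof
  fix v
  assume "v \<in> cmp_vertices (k + 1) K_sizes"
  then have "(if fst v = 0 then 1 else snd v) \<in> {..k}"
    using assms by (cases v) (auto simp: K_sizes_def)
  then show "finite (K_list k v) \<and> card (K_list k v) = k"
    by (simp add: K_list_def)
qed

lemma L_coloring_K_part_coloring:
  "L_coloring (cmp_vertices (k + 1) K_sizes) (cmp_edges (k + 1) K_sizes) (K_list k) (K_part_coloring k)"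
  by (auto simp: L_coloring_def K_part_coloring_def K_list_def K_sizes_def
      cmp_edges_def split: if_splits)

lemma L_coloring_K_list_unique:
  assumes c: "L_coloring (cmp_vertices (k + 1) K_sizes) (cmp_edges (k + 1) K_sizes) (K_list k) c"
  shows "c = K_part_coloring k"
proof -
  let ?V = "cmp_vertices (k + 1) K_sizes"
  let ?\<sigma> = "\<lambda>i. c (i, 0)"
  have in_list: "c v \<in> K_list k v" if "v \<in> ?V" for v
    using c that by (simp add: L_coloring_def)
  have proper: "c u \<noteq> c v" if "cmp_edges (k + 1) K_sizes u v" for u v
    using c that by (simp add: L_coloring_def cmp_edges_def)
  have "c ` ?V \<subseteq> {..k}"
    using in_list by (auto simp: K_list_def)
  moreover have "\<And>i. i < k + 1 \<Longrightarrow> 0 < K_sizes i"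
    by (simp add: K_sizes_def)
  moreover have "card {..k} \<le> k + 1"
    by simp
  ultimately have bij: "bij_betw ?\<sigma> {..<k + 1} {..k}"
    and by_parts: "\<And>i j. (i, j) \<in> ?V \<Longrightarrow> c (i, j) = ?\<sigma> i"
    using cmp_coloring_by_parts[of "k + 1" K_sizes c "{..k}"] proper by blast+
  have "i \<le> ?\<sigma> i" if "i \<le> k" for i
  proof (rule ccontr)
    assume "\<not> i \<le> ?\<sigma> i"
    then have "i \<noteq> 0" and vertex: "(i, ?\<sigma> i) \<in> ?V"
      using that by (simp_all add: K_sizes_def)
    moreover have "?\<sigma> i \<in> K_list k (i, ?\<sigma> i)"
      using in_list[OF vertex] by_parts[OF vertex] by simp
    ultimately show False
      by (simp add: K_list_def)
  qed
  then have fixed: "?\<sigma> i = i" if "i \<le> k" for i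
    using inflationary_inj_endo_fixes[of "{..k}" ?\<sigma> i] bij that
    by (simp add: bij_betw_def lessThan_Suc_atMost)
  show ?thesis
  proof
    fix v
    show "c v = K_part_coloring k v"
      using c fixed by_parts
      by (cases v) (auto simp: L_coloring_def K_part_coloring_def)
  qed
qed

theorem mainTheorem17:
  fixes k :: nat
  assumes "k \<ge> 1"
  shows "uniquely_k_list_colorable (cmp_vertices (k + 1) K_sizes) (cmp_edges (k + 1) K_sizes) k"
  unfolding uniquely_k_list_colorable_def
  using k_list_assignment_K_list[OF assms] L_coloring_K_part_coloring L_coloring_K_list_unique
  by blast

end
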